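(* Let $d\ge1$. Let $F:(0,\infty)\to\mathbb R$ be continuous and one-well, i.e. there is $r_0>0$ such that $F$ is strictly decreasing on $(0,r_0)$ and strictly increasing on $(r_0,\infty)$. Let $\rho:(0,\infty)\to[0,\infty)$ be continuous, strictly decreasing, with $\rho(r)=O(r^{-d-\eta})$ as $r\to\infty$ for some $\eta>0$. Then for every $L\in\mathcal L_d(1)$ the function $\lambda\mapsto F(E_\rho[\lambda L])$ has a unique minimizer $\lambda^{F,\rho}_L>0$ on $(0,\infty)$, and $F(E_\rho[\lambda^{F,\rho}_L L])=\min F=F(r_0)$. Furthermore, if $L_d\in\mathcal L_d(1)$ is the unique (up to isometries) minimizer on $\mathcal L_d(1)$ of $L\mapsto E_\rho[\lambda^{F,\rho}_{L_d}L]$, then $L_d$ is the unique (up to isometries) minimizer on $\mathcal L_d(1)$ of $L\mapsto\lambda^{F,\rho}_L$.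
   Context: $\mathcal L_d$ denotes the set of all lattices $L=\bigoplus_{i=1}^d\mathbb Z u_i$ with $\{u_i\}$ a basis of $\mathbb R^d$, and $\mathcal L_d(1)\subset\mathcal L_d$ the lattices with $|\det(u_1,\dots,u_d)|=1$. For a function $f:(0,\infty)\to\mathbb R$ with $|f(r)|=O(r^{-d-\eta})$ as $r\to\infty$ for some $\eta>0$, $E_f[L]:=\sum_{q\in L\setminus\{0\}}f(|q|)$. Uniqueness of minimizers among lattices is understood up to isometries. *)

theory Defs
  imports "HOL-Analysis.Analysis" "HOL-Library.Landau_Symbols"
begin

definition lattice_of :: "real^'n^'n \<Rightarrow> (real^'n) set" where
  "lattice_of A = range (\<lambda>k::'n \<Rightarrow> int. A *v (\<chi> i. of_int (k i)))"

definition lattices :: "(real^'n) set set" where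
  "lattices = {lattice_of A | A. det A \<noteq> 0}"

definition unit_lattices :: "(real^'n) set set" where
  "unit_lattices = {lattice_of A | A. \<bar>det A\<bar> = 1}"

definition lattice_energy :: "(real \<Rightarrow> real) \<Rightarrow> (real^'n) set \<Rightarrow> real" where
  "lattice_energy f L = infsum (\<lambda>q. f (norm q)) (L - {0})"

definition scale_lattice :: "real \<Rightarrow> (real^'n) set \<Rightarrow> (real^'n) set" where
  "scale_lattice c L = (\<lambda>x. c *\<^sub>R x) ` L"

definition isometric_lattices :: "(real^'n) set \<Rightarrow> (real^'n) set \<Rightarrow> bool" where
  "isometric_lattices L L' \<longleftrightarrow>
     (\<exists>f :: real^'n \<Rightarrow> real^'n. (\<forall>x y. dist (f x) (f y) = dist x y) \<and> f ` L = L')"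

definition lambda_opt :: "(real \<Rightarrow> real) \<Rightarrow> (real \<Rightarrow> real) \<Rightarrow> (real^'n) set \<Rightarrow> real" where
  "lambda_opt F \<rho> L = (THE s. s > 0 \<and>
      (\<forall>\<mu>>0. F (lattice_energy \<rho> (scale_lattice s L)) \<le> F (lattice_energy \<rho> (scale_lattice \<mu> L))))"

end

theory Submission
  imports Defs
begin

text \<open>
  For a fixed lattice L, the energy l \<mapsto> E(l L) is a continuous, strictly decreasing
  bijection of (0,\<infinity>) onto itself: the decay of \<rho> together with the convergence of
  \<Sum> |q| powr -s (s > d) over L - {0} makes it finite and continuous and lets it tend to 0
  at \<infinity>, while the infinitely many lattice points make it blow up at 0. Hence F(E(l L)) is
  minimal exactly at the unique l with E(l L) = r0. If L_d minimizes E(\<lambda> L) at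
  \<lambda> = \<lambda>(L_d), then E(\<lambda>(L_d) L) \<ge> r0 = E(\<lambda>(L) L), and monotonicity gives
  \<lambda>(L_d) \<le> \<lambda>(L), with equality only if L also realizes the energy minimum.
\<close>

subsection \<open>Convergence of the Epstein-type sum over integer vectors\<close>

lemma summable_on_one_plus_square_powr_nat:
  assumes "p > 1/2"
  shows "(\<lambda>n::nat. (1 + (real n)^2) powr (-p)) summable_on UNIV"
proof -
  have "summable (\<lambda>n::nat. real n powr (-2*p))"
    using assms by (simp only: summable_real_powr_iff)
  moreover have "\<forall>\<^sub>F n in sequentially. norm ((1 + (real n)^2) powr (-p)) \<le> real n powr (-2*p)"
  proof (rule eventually_sequentiallyI[of 1])
    fix n :: nat assume "n \<ge> 1"
    then have n: "real n > 0" by simp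
    have "(1 + (real n)^2) powr (-p) \<le> (real n powr 2) powr (-p)"
      using n assms by (intro powr_mono2') simp_all
    also have "\<dots> = real n powr (-2*p)"
      by (simp only: powr_powr) simp
    finally show "norm ((1 + (real n)^2) powr (-p)) \<le> real n powr (-2*p)" by simp
  qed
  ultimately have "summable (\<lambda>n::nat. (1 + (real n)^2) powr (-p))"
    by (rule summable_comparison_test_ev[rotated])
  then show ?thesis
    by (subst summable_on_UNIV_nonneg_real_iff) auto
qed

lemma summable_on_one_plus_square_powr_int:
  assumes "p > 1/2"
  shows "(\<lambda>m::int. (1 + (real_of_int m)^2) powr (-p)) summable_on UNIV"
proof -
  let ?f = "\<lambda>m::int. (1 + (real_of_int m)^2) powr (-p)"
  have "(UNIV::int set) = int ` UNIV \<union> (\<lambda>n. - int n) ` UNIV"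
    by (auto intro: int_cases)
  moreover have "?f summable_on int ` UNIV" "?f summable_on (\<lambda>n. - int n) ` UNIV"
    by (subst summable_on_reindex;
        use summable_on_one_plus_square_powr_nat[OF assms] in \<open>auto simp: o_def inj_on_def\<close>)+
  ultimately show ?thesis
    by (metis summable_on_union)
qed

lemma summable_on_prod_PiE_UNIV:
  fixes f :: "'i::finite \<Rightarrow> 'b::countable \<Rightarrow> real"
  assumes "\<And>i. f i summable_on UNIV" and "\<And>i b. f i b \<ge> 0"
  shows "(\<lambda>g. \<Prod>i\<in>UNIV. f i (g i)) summable_on UNIV"
proof -
  have "Infinite_Set_Sum.abs_summable_on (f i) UNIV" for i
    using assms by (simp flip: abs_summable_equivalent)
  then have "Infinite_Set_Sum.abs_summable_on (\<lambda>g. \<Prod>i\<in>UNIV. f i (g i)) UNIV"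
    using abs_summable_on_prod_PiE[of UNIV "\<lambda>_. UNIV" f] by simp
  then show ?thesis
    using assms(2) by (simp add: prod_nonneg flip: abs_summable_equivalent)
qed

text \<open>The sum is bounded by a product of one-dimensional sums, each convergent since s > d.\<close>

lemma one_plus_sum_squares_powr_le_prod:
  fixes k :: "'n::finite \<Rightarrow> int"
  assumes "s > 0"
  shows "(1 + (\<Sum>i\<in>UNIV. (real_of_int (k i))^2)) powr (-s/2)
     \<le> (\<Prod>i\<in>UNIV. (1 + (real_of_int (k i))^2) powr (-(s / (2 * real CARD('n)))))"
proof -
  define p where "p = s / (2 * real CARD('n))"
  define T where "T = 1 + (\<Sum>i\<in>UNIV. (real_of_int (k i))^2)"
  have "T \<ge> 1" unfolding T_def by (simp add: sum_nonneg)
  then have "T powr (-s/2) = (T ^ CARD('n)) powr (-p)"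
    by (simp add: powr_realpow[symmetric] powr_powr p_def)
  also have "\<dots> \<le> (\<Prod>i\<in>UNIV. (1 + (real_of_int (k i))^2)) powr (-p)"
  proof (intro powr_mono2')
    show "(\<Prod>i\<in>UNIV. (1 + (real_of_int (k i))^2)) \<le> T ^ CARD('n)"
      using prod_mono[of UNIV "\<lambda>i. 1 + (real_of_int (k i))^2" "\<lambda>_. T"]
        member_le_sum[of _ UNIV "\<lambda>i. (real_of_int (k i))^2"]
      by (simp add: T_def)
  qed (use assms in \<open>auto simp: p_def add_pos_nonneg intro: prod_pos\<close>)
  also have "\<dots> = (\<Prod>i\<in>UNIV. (1 + (real_of_int (k i))^2) powr (-p))"
    by (simp add: prod_powr_distrib)
  finally show ?thesis unfolding T_def p_def .
qed

lemma summable_on_one_plus_sum_squares_powr: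
  assumes "s > real CARD('n)"
  shows "(\<lambda>k::'n::finite \<Rightarrow> int. (1 + (\<Sum>i\<in>UNIV. (real_of_int (k i))^2)) powr (-s/2))
           summable_on UNIV"
proof (rule summable_on_comparison_test)
  define p where "p = s / (2 * real CARD('n))"
  have "p > 1/2"
    using assms by (simp add: p_def pos_less_divide_eq)
  then show "(\<lambda>k::'n \<Rightarrow> int. \<Prod>i\<in>UNIV. (1 + (real_of_int (k i))^2) powr (-p)) summable_on UNIV"
    using summable_on_prod_PiE_UNIV[where f = "\<lambda>i m. (1 + (real_of_int m)^2) powr (-p)",
        OF summable_on_one_plus_square_powr_int] by simp
  have "s > 0"
    using assms of_nat_0_le_iff[of "CARD('n)"] by linarith
  then show "(1 + (\<Sum>i\<in>UNIV. (real_of_int (k i))^2)) powr (-s/2)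
      \<le> (\<Prod>i\<in>UNIV. (1 + (real_of_int (k i))^2) powr (-p))" for k :: "'n \<Rightarrow> int"
    unfolding p_def by (rule one_plus_sum_squares_powr_le_prod)
qed simp

subsection \<open>Energy of a discrete point set under dilation\<close>

locale decreasing_potential =
  fixes \<rho> :: "real \<Rightarrow> real"
  assumes rho_cont: "continuous_on {0<..} \<rho>"
    and rho_nonneg: "\<And>r. r > 0 \<Longrightarrow> \<rho> r \<ge> 0"
    and rho_dec: "\<And>x y. 0 < x \<Longrightarrow> x < y \<Longrightarrow> \<rho> y < \<rho> x"
begin

lemma rho_antimono: "0 < x \<Longrightarrow> x \<le> y \<Longrightarrow> \<rho> y \<le> \<rho> x"
  using rho_dec[of x y] by (cases "x = y") auto

lemma rho_pos: "r > 0 \<Longrightarrow> \<rho> r > 0"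
  using rho_dec[of r "r + 1"] rho_nonneg[of "r + 1"] by simp

end

text \<open>S plays the role of L - {0}.\<close>

locale dilation_energy = decreasing_potential +
  fixes S :: "'a::real_normed_vector set" and \<delta> s C R :: real
  assumes delta_pos: "\<delta> > 0"
    and norm_ge_delta: "\<And>q. q \<in> S \<Longrightarrow> \<delta> \<le> norm q"
    and s_pos: "s > 0"
    and summable_norm_powr: "(\<lambda>q. norm q powr (-s)) summable_on S"
    and infinite_S: "infinite S"
    and R_pos: "R > 0"
    and C_nonneg: "C \<ge> 0"
    and rho_decay: "\<And>r. r \<ge> R \<Longrightarrow> \<rho> r \<le> C * r powr (-s)"
begin

definition energy :: "real \<Rightarrow> real" where
  "energy l = (\<Sum>\<^sub>\<infinity>q\<in>S. \<rho> (l * norm q))"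

lemma norm_pos: "q \<in> S \<Longrightarrow> norm q > 0"
  using norm_ge_delta[of q] delta_pos by linarith

lemma rho_dilated_nonneg: "l > 0 \<Longrightarrow> q \<in> S \<Longrightarrow> \<rho> (l * norm q) \<ge> 0"
  using norm_pos by (intro rho_nonneg) simp

lemma rho_dilated_le_powr:
  assumes "l > 0" "q \<in> S"
  shows "\<rho> (l * norm q) \<le> (C * l powr (-s) + \<rho> (l * \<delta>) * (R / l) powr s) * norm q powr (-s)"
proof -
  have n: "norm q > 0" "\<delta> \<le> norm q" using norm_pos norm_ge_delta assms by auto
  have ld: "l * \<delta> > 0" using assms delta_pos by simp
  have K1: "0 \<le> C * l powr (-s)" and K2: "0 \<le> \<rho> (l * \<delta>) * (R / l) powr s"
    using C_nonneg rho_nonneg[OF ld] by simp_all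
  show ?thesis
  proof (cases "l * norm q \<ge> R")
    case True
    then have "\<rho> (l * norm q) \<le> (C * l powr (-s)) * norm q powr (-s)"
      using rho_decay[OF True] assms n by (simp add: powr_mult)
    then show ?thesis
      using K2 by (smt (verit) mult_right_mono powr_ge_zero)
  next
    case False
    then have nR: "norm q \<le> R / l" using assms by (simp add: field_simps)
    have "\<rho> (l * norm q) \<le> \<rho> (l * \<delta>)"
      using n assms by (intro rho_antimono[OF ld]) simp
    also have "\<dots> = \<rho> (l * \<delta>) * (R / l) powr s * (R / l) powr (-s)"
      using R_pos assms by (simp add: powr_minus field_simps)
    also have "\<dots> \<le> \<rho> (l * \<delta>) * (R / l) powr s * norm q powr (-s)"
      by (intro mult_left_mono powr_mono2') (use n nR K2 s_pos in auto)
    finally show ?thesis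
      using K1 by (smt (verit) mult_right_mono powr_ge_zero)
  qed
qed

lemma summable_on_rho_dilated:
  assumes "l > 0"
  shows "(\<lambda>q. \<rho> (l * norm q)) summable_on S"
  by (rule summable_on_comparison_test[OF summable_on_cmult_right[OF summable_norm_powr]])
    (use rho_dilated_le_powr rho_dilated_nonneg assms in auto)

lemma has_sum_energy: "l > 0 \<Longrightarrow> ((\<lambda>q. \<rho> (l * norm q)) has_sum energy l) S"
  unfolding energy_def by (rule has_sum_infsum[OF summable_on_rho_dilated])

lemma energy_strict_antimono:
  assumes "0 < l" "l < m"
  shows "energy m < energy l"
proof -
  obtain q0 where "q0 \<in> S" using infinite_S by (metis ex_in_conv finite.emptyI)
  then show ?thesis
    using assms norm_pos
    by (intro has_sum_strict_mono[OF has_sum_energy has_sum_energy, where x = q0])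
      (auto intro!: rho_antimono rho_dec)
qed

lemma inj_on_energy: "inj_on energy {0<..}"
proof (rule inj_onI)
  fix l m assume "l \<in> {0<..}" "m \<in> {0<..}" "energy l = energy m"
  then show "l = m"
    using energy_strict_antimono[of l m] energy_strict_antimono[of m l]
    by (cases l m rule: linorder_cases) auto
qed

lemma energy_pos:
  assumes "l > 0"
  shows "energy l > 0"
proof -
  obtain q0 where "q0 \<in> S" using infinite_S by (metis ex_in_conv finite.emptyI)
  then show ?thesis
    using assms norm_pos
    by (intro has_sum_strict_mono[OF has_sum_0 has_sum_energy, where x = q0])
      (auto intro!: rho_dilated_nonneg rho_pos)
qed

text \<open>On [x/2, 2x] the series is dominated termwise by its value at x/2 (Weierstrass M-test).\<close>

lemma isCont_energy:
  assumes x: "x > 0"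
  shows "isCont energy x"
proof -
  define Y where "Y = {x/2..2*x}"
  have uniform: "uniform_limit Y (\<lambda>X y. \<Sum>q\<in>X. \<rho> (y * norm q)) energy (finite_subsets_at_top S)"
    unfolding energy_def[abs_def]
  proof (rule Weierstrass_m_test_general[where M = "\<lambda>q. \<rho> (x/2 * norm q)"])
    show "norm (\<rho> (y * norm q)) \<le> \<rho> (x/2 * norm q)" if "q \<in> S" "y \<in> Y" for q y
    proof -
      have y: "x/2 \<le> y" and q: "norm q > 0"
        using that norm_pos by (auto simp: Y_def)
      then have "\<rho> (y * norm q) \<le> \<rho> (x/2 * norm q)"
        using x by (intro rho_antimono mult_right_mono) auto
      moreover have "\<rho> (y * norm q) \<ge> 0"
        using x y \<open>q \<in> S\<close> by (intro rho_dilated_nonneg) auto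
      ultimately show ?thesis by simp
    qed
  qed (rule summable_on_rho_dilated, use x in simp)
  have finite_sums_cont: "\<forall>\<^sub>F X in finite_subsets_at_top S.
      continuous_on Y (\<lambda>y. \<Sum>q\<in>X. \<rho> (y * norm q))"
  proof (rule eventually_finite_subsets_at_top_weakI, intro continuous_on_sum)
    fix X q assume "finite X" "X \<subseteq> S" "q \<in> X"
    then have "norm q > 0" using norm_pos by blast
    then show "continuous_on Y (\<lambda>y. \<rho> (y * norm q))"
      using x by (intro continuous_on_compose2[OF rho_cont] continuous_intros)
        (auto simp: Y_def)
  qed
  have "continuous_on Y energy"
    by (rule uniform_limit_theorem[OF finite_sums_cont uniform]) simp
  moreover have "x \<in> interior Y" using x by (simp add: Y_def)
  ultimately show ?thesis by (rule continuous_on_interior)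
qed

lemma energy_small: "t > 0 \<Longrightarrow> \<exists>b>0. energy b < t"
proof -
  assume t: "t > 0"
  define Z where "Z = (\<Sum>\<^sub>\<infinity>q\<in>S. norm q powr (-s))"
  have bound: "energy l \<le> C * l powr (-s) * Z" if l: "l \<ge> R / \<delta>" for l
  proof -
    have l0: "l > 0" using l R_pos delta_pos by (meson divide_pos_pos less_le_trans)
    have "energy l \<le> (\<Sum>\<^sub>\<infinity>q\<in>S. (C * l powr (-s)) * norm q powr (-s))"
      unfolding energy_def
    proof (rule infsum_mono[OF summable_on_rho_dilated[OF l0]
          summable_on_cmult_right[OF summable_norm_powr]])
      fix q assume q: "q \<in> S"
      have "R \<le> l * \<delta>" using l delta_pos by (simp add: field_simps)
      also have "\<dots> \<le> l * norm q" using norm_ge_delta[OF q] l0 by simp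
      finally have "\<rho> (l * norm q) \<le> C * (l * norm q) powr (-s)" by (rule rho_decay)
      then show "\<rho> (l * norm q) \<le> (C * l powr (-s)) * norm q powr (-s)"
        using l0 norm_pos[OF q] by (simp add: powr_mult)
    qed
    then show ?thesis
      by (simp add: Z_def infsum_cmult_right')
  qed
  have "((\<lambda>l. C * l powr (-s) * Z) \<longlongrightarrow> C * 0 * Z) at_top"
    by (intro tendsto_intros tendsto_neg_powr filterlim_ident) (use s_pos in simp)
  then have "\<forall>\<^sub>F l in at_top. C * l powr (-s) * Z < t"
    using t by (intro order_tendstoD(2)) simp_all
  then obtain N where N: "\<And>l. l \<ge> N \<Longrightarrow> C * l powr (-s) * Z < t"
    by (auto simp: eventually_at_top_linorder)
  define b where "b = max 1 (max N (R / \<delta>))"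
  have "b > 0" "b \<ge> R / \<delta>" "b \<ge> N"
    by (simp_all add: b_def)
  then show ?thesis
    using bound[of b] N[of b] by (intro exI[of _ b]) auto
qed

text \<open>
  Dilating a finite set of N points of S into the unit ball yields energy \<ge> N \<rho>(1),
  and S has arbitrarily large finite subsets.
\<close>

lemma energy_large: "\<exists>a>0. energy a > t"
proof -
  define N where "N = nat \<lceil>\<bar>t\<bar> / \<rho> 1\<rceil> + 1"
  obtain T where T: "finite T" "card T = N" "T \<subseteq> S"
    using infinite_arbitrarily_large[OF infinite_S] by blast
  have "T \<noteq> {}" using T(2) N_def by auto
  define M where "M = Max (norm ` T)"
  have norm_le_M: "norm q \<le> M" if "q \<in> T" for q
    unfolding M_def using T(1) that by (intro Max_ge) auto
  have M: "M > 0"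
    using \<open>T \<noteq> {}\<close> norm_le_M norm_pos T(3) by (meson all_not_in_conv less_le_trans subsetD)
  define a where "a = 1 / M"
  have a: "a > 0" using M by (simp add: a_def)
  have "\<rho> 1 \<le> \<rho> (a * norm q)" if "q \<in> T" for q
    using norm_pos[of q] that T(3) norm_le_M[OF that] M a
    by (intro rho_antimono) (auto simp: a_def field_simps)
  then have "real N * \<rho> 1 \<le> (\<Sum>q\<in>T. \<rho> (a * norm q))"
    using sum_mono[of T "\<lambda>_. \<rho> 1"] T(2) by simp
  also have "\<dots> \<le> energy a"
    unfolding energy_def using T a rho_dilated_nonneg
    by (subst infsum_finite[symmetric], simp,
        intro infsum_mono2 summable_on_rho_dilated) auto
  finally have "real N * \<rho> 1 \<le> energy a" .
  moreover have "\<bar>t\<bar> < real N * \<rho> 1"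
    using rho_pos[of 1] by (simp add: N_def pos_divide_less_eq[symmetric]) linarith
  ultimately show ?thesis using a by (intro exI[of _ a]) auto
qed

lemma energy_ex1_eq:
  assumes t: "t > 0"
  shows "\<exists>!l. l > 0 \<and> energy l = t"
proof -
  obtain a where a: "a > 0" "energy a > t" using energy_large by blast
  obtain b where b: "b > 0" "energy b < t" using energy_small[OF t] by blast
  have "a \<le> b"
  proof (rule ccontr)
    assume "\<not> a \<le> b"
    then have "energy a < energy b" using energy_strict_antimono[OF b(1)] by simp
    then show False using a b by linarith
  qed
  moreover have "continuous_on {a..b} energy"
    using a by (intro continuous_at_imp_continuous_on ballI isCont_energy) auto
  ultimately obtain x where "x \<ge> a" "x \<le> b" "energy x = t"
    using IVT2'[of energy b t a] a b by auto
  then show ?thesis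
    using a inj_on_energy[THEN inj_onD] by (intro ex1I[of _ x]) force+
qed

end

subsection \<open>Lattices\<close>

definition of_int_vec :: "('n::finite \<Rightarrow> int) \<Rightarrow> real^'n" where
  "of_int_vec k = (\<chi> i. real_of_int (k i))"

lemma inj_of_int_vec: "inj of_int_vec"
  by (auto simp: inj_def of_int_vec_def vec_eq_iff fun_eq_iff)

lemma of_int_vec_eq_0_iff: "of_int_vec k = 0 \<longleftrightarrow> k = (\<lambda>_. 0)"
  by (auto simp: of_int_vec_def vec_eq_iff fun_eq_iff)

lemma norm_of_int_vec_squared: "(norm (of_int_vec k))^2 = (\<Sum>i\<in>UNIV. (real_of_int (k i))^2)"
  by (subst power2_norm_eq_inner) (simp add: inner_vec_def of_int_vec_def power2_eq_square)

lemma norm_of_int_vec_ge_1: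
  assumes "k \<noteq> (\<lambda>_. 0)"
  shows "norm (of_int_vec k) \<ge> 1"
proof -
  obtain i where "k i \<noteq> 0" using assms by (auto simp: fun_eq_iff)
  then have "1 \<le> \<bar>of_int_vec k $ i\<bar>" by (simp add: of_int_vec_def)
  also have "\<dots> \<le> norm (of_int_vec k)" by (rule component_le_norm_cart)
  finally show ?thesis .
qed

lemma powr_le_one_plus_square_powr:
  fixes v s :: real
  assumes v: "v \<ge> 1" and s: "s > 0"
  shows "v powr (-s) \<le> 2 powr (s/2) * (1 + v^2) powr (-s/2)"
proof -
  have "v powr (-s) = 2 powr (s/2) * (2 * v^2) powr (-s/2)"
    using v by (simp add: powr_mult powr_powr mult.assoc[symmetric] powr_add[symmetric]
        flip: powr_numeral)
  also have "\<dots> \<le> 2 powr (s/2) * (1 + v^2) powr (-s/2)"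
    using s v one_le_power[of v 2]
    by (intro mult_left_mono powr_mono2') (auto simp: add_pos_nonneg)
  finally show ?thesis .
qed

context
  fixes A :: "real^'n::finite^'n"
  assumes det_A: "det A \<noteq> 0"
begin

lemma inj_matrix_vector_mult: "inj ((*v) A)"
  using det_A det_nz_iff_inj[of "(*v) A"] by simp

lemma lattice_of_minus_0: "lattice_of A - {0} = (\<lambda>k. A *v of_int_vec k) ` (UNIV - {\<lambda>_. 0})"
proof -
  have "A *v of_int_vec k = 0 \<longleftrightarrow> k = (\<lambda>_. 0)" for k
    using inj_matrix_vector_mult of_int_vec_eq_0_iff[of k]
    by (metis injD matrix_vector_mult_0_right)
  then show ?thesis
    unfolding lattice_of_def of_int_vec_def[symmetric] by auto
qed

lemma lattice_norm_bounded_below: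
  obtains B where "B > 0" "\<And>k. B * norm k \<le> norm (A *v k)"
  using linear_inj_bounded_below_pos[OF matrix_vector_mul_linear inj_matrix_vector_mult]
  by blast

lemma infinite_lattice_minus_0: "infinite (lattice_of A - {0})"
proof -
  have "inj (\<lambda>m::int. (\<lambda>_::'n. m))" by (auto simp: inj_def fun_eq_iff)
  then have "infinite (UNIV - {(\<lambda>_. 0)::'n \<Rightarrow> int})"
    by (metis finite_Diff2 finite_imageD finite_subset infinite_UNIV_int subset_UNIV finite.simps)
  moreover have "inj (\<lambda>k. A *v of_int_vec k)"
    using inj_compose[OF inj_matrix_vector_mult inj_of_int_vec] by (simp add: o_def)
  ultimately show ?thesis
    unfolding lattice_of_minus_0 by (metis finite_imageD inj_on_subset subset_UNIV)
qed

lemma summable_on_lattice_norm_powr: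
  assumes s: "s > real CARD('n)"
  shows "(\<lambda>q. norm q powr (-s)) summable_on (lattice_of A - {0})"
proof -
  obtain B where B: "B > 0" "\<And>k. B * norm k \<le> norm (A *v k)"
    using lattice_norm_bounded_below by blast
  have s0: "s > 0" using s of_nat_0_le_iff[of "CARD('n)"] by linarith
  have "norm (A *v of_int_vec k) powr (-s)
        \<le> B powr (-s) * 2 powr (s/2) * (1 + (\<Sum>i\<in>UNIV. (real_of_int (k i))^2)) powr (-s/2)"
    if k: "k \<noteq> (\<lambda>_. 0)" for k
  proof -
    define v where "v = norm (of_int_vec k)"
    have v: "v \<ge> 1" using norm_of_int_vec_ge_1[OF k] by (simp add: v_def)
    have "B * v > 0" using B v by simp
    then have "norm (A *v of_int_vec k) powr (-s) \<le> (B * v) powr (-s)"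
      using B s0 unfolding v_def by (intro powr_mono2') auto
    also have "\<dots> = B powr (-s) * v powr (-s)"
      using B v by (simp add: powr_mult)
    also have "\<dots> \<le> B powr (-s) * (2 powr (s/2) * (1 + v^2) powr (-s/2))"
      by (intro mult_left_mono powr_le_one_plus_square_powr[OF v s0]) simp
    finally show ?thesis
      by (simp add: v_def norm_of_int_vec_squared mult.assoc)
  qed
  moreover have "inj_on (\<lambda>k. A *v of_int_vec k) (UNIV - {\<lambda>_. 0})"
    using inj_compose[OF inj_matrix_vector_mult inj_of_int_vec] by (simp add: o_def inj_on_def inj_def)
  ultimately show ?thesis
    unfolding lattice_of_minus_0
    by (subst summable_on_reindex, simp,
        intro summable_on_comparison_test[OF summable_on_subset_banach[OF
            summable_on_cmult_right[OF summable_on_one_plus_sum_squares_powr[OF s]]]])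
      auto
qed

end

lemma unit_lattices_subset_lattices: "unit_lattices \<subseteq> lattices"
  unfolding unit_lattices_def lattices_def by auto

lemma lattice_energy_scale_lattice:
  fixes L :: "(real^'n) set"
  assumes l: "l > 0"
  shows "lattice_energy \<rho> (scale_lattice l L) = (\<Sum>\<^sub>\<infinity>q\<in>L - {0}. \<rho> (l * norm q))"
proof -
  have "scale_lattice l L - {0} = (\<lambda>x. l *\<^sub>R x) ` (L - {0})"
    unfolding scale_lattice_def using l by auto
  moreover have "inj_on (\<lambda>x. l *\<^sub>R x) (L - {0})"
    using l by (auto simp: inj_on_def)
  ultimately show ?thesis
    unfolding lattice_energy_def using l by (simp add: infsum_reindex o_def)
qed

lemma bigo_powr_imp_eventually_le:
  fixes f :: "real \<Rightarrow> real"
  assumes "f \<in> O[at_top](\<lambda>r. r powr (-s))"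
  obtains C R where "C \<ge> 0" "R > 0" "\<And>r. r \<ge> R \<Longrightarrow> f r \<le> C * r powr (-s)"
proof -
  obtain C where "C > 0" "\<forall>\<^sub>F r in at_top. norm (f r) \<le> C * norm (r powr (-s))"
    using assms by (elim landau_o.bigE) blast
  then obtain N where "\<And>r. r \<ge> N \<Longrightarrow> \<bar>f r\<bar> \<le> C * r powr (-s)"
    by (auto simp: eventually_at_top_linorder)
  then show thesis
    using \<open>C > 0\<close> by (intro that[of C "max N 1"]) force+
qed

context decreasing_potential
begin

lemma dilation_energy_lattice:
  fixes L :: "(real^'n::finite) set"
  assumes decay: "\<exists>\<eta>>0. \<rho> \<in> O[at_top](\<lambda>r. r powr (- real CARD('n) - \<eta>))"
    and L: "L \<in> lattices"
  obtains \<delta> s C R where "dilation_energy \<rho> (L - {0}) \<delta> s C R"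
proof -
  obtain A :: "real^'n^'n" where A: "L = lattice_of A" "det A \<noteq> 0"
    using L unfolding lattices_def by blast
  obtain \<eta> where \<eta>: "\<eta> > 0" "\<rho> \<in> O[at_top](\<lambda>r. r powr (- (real CARD('n) + \<eta>)))"
    using decay by auto
  obtain C R where CR: "C \<ge> 0" "R > 0" "\<And>r. r \<ge> R \<Longrightarrow> \<rho> r \<le> C * r powr (- (real CARD('n) + \<eta>))"
    using bigo_powr_imp_eventually_le[OF \<eta>(2)] by blast
  obtain B where B: "B > 0" "\<And>k. B * norm k \<le> norm (A *v k)"
    using lattice_norm_bounded_below[OF A(2)] by blast
  have "B \<le> norm q" if q: "q \<in> L - {0}" for q
  proof -
    obtain k where k: "k \<noteq> (\<lambda>_. 0)" "q = A *v of_int_vec k"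
      using q unfolding A(1) lattice_of_minus_0[OF A(2)] by blast
    have "B * 1 \<le> B * norm (of_int_vec k)"
      using B(1) norm_of_int_vec_ge_1[OF k(1)] by (rule_tac mult_left_mono) auto
    also have "\<dots> \<le> norm q"
      unfolding k(2) by (rule B(2))
    finally show ?thesis by simp
  qed
  then have "dilation_energy \<rho> (L - {0}) B (real CARD('n) + \<eta>) C R"
    using \<eta>(1) B(1) CR A infinite_lattice_minus_0[OF A(2)]
      summable_on_lattice_norm_powr[OF A(2), of "real CARD('n) + \<eta>"]
    by unfold_locales (auto intro: add_pos_nonneg)
  then show thesis by (rule that)
qed

lemma scaled_lattice_energy_strict_antimono:
  assumes "\<exists>\<eta>>0. \<rho> \<in> O[at_top](\<lambda>r. r powr (- real CARD('n) - \<eta>))"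
    and "(L :: (real^'n::finite) set) \<in> lattices" and "0 < l" "l < m"
  shows "lattice_energy \<rho> (scale_lattice m L) < lattice_energy \<rho> (scale_lattice l L)"
proof -
  obtain \<delta> s C R where "dilation_energy \<rho> (L - {0}) \<delta> s C R"
    using dilation_energy_lattice[OF assms(1,2)] .
  then show ?thesis
    using assms(3,4) dilation_energy.energy_strict_antimono
    by (fastforce simp: lattice_energy_scale_lattice dilation_energy.energy_def)
qed

lemma scaled_lattice_energy_le_iff:
  assumes "\<exists>\<eta>>0. \<rho> \<in> O[at_top](\<lambda>r. r powr (- real CARD('n) - \<eta>))"
    and "(L :: (real^'n::finite) set) \<in> lattices" and "l > 0" "m > 0"
  shows "lattice_energy \<rho> (scale_lattice m L) \<le> lattice_energy \<rho> (scale_lattice l L) \<longleftrightarrow> l \<le> m"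
  using scaled_lattice_energy_strict_antimono[OF assms(1,2)] assms(3,4)
  by (metis linorder_not_less order_le_less)

lemma scaled_lattice_energy_pos:
  assumes "\<exists>\<eta>>0. \<rho> \<in> O[at_top](\<lambda>r. r powr (- real CARD('n) - \<eta>))"
    and "(L :: (real^'n::finite) set) \<in> lattices" and "l > 0"
  shows "lattice_energy \<rho> (scale_lattice l L) > 0"
proof -
  obtain \<delta> s C R where "dilation_energy \<rho> (L - {0}) \<delta> s C R"
    using dilation_energy_lattice[OF assms(1,2)] .
  then show ?thesis
    using assms(3) dilation_energy.energy_pos
    by (fastforce simp: lattice_energy_scale_lattice dilation_energy.energy_def)
qed

lemma scaled_lattice_energy_ex1_eq:
  assumes "\<exists>\<eta>>0. \<rho> \<in> O[at_top](\<lambda>r. r powr (- real CARD('n) - \<eta>))"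
    and "(L :: (real^'n::finite) set) \<in> lattices" and "t > 0"
  shows "\<exists>!l. l > 0 \<and> lattice_energy \<rho> (scale_lattice l L) = t"
proof -
  obtain \<delta> s C R where E: "dilation_energy \<rho> (L - {0}) \<delta> s C R"
    using dilation_energy_lattice[OF assms(1,2)] .
  have "(l > 0 \<and> lattice_energy \<rho> (scale_lattice l L) = t)
      \<longleftrightarrow> (l > 0 \<and> dilation_energy.energy \<rho> (L - {0}) l = t)" for l
    using E by (auto simp: lattice_energy_scale_lattice dilation_energy.energy_def)
  then show ?thesis
    using dilation_energy.energy_ex1_eq[OF E assms(3)] by simp
qed

end

subsection \<open>The one-well minimization\<close>

lemma one_well_strict_min:
  fixes F :: "real \<Rightarrow> real"
  assumes F_cont: "continuous_on {0<..} F"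
    and r0_pos: "r0 > 0"
    and F_dec: "\<And>x y. 0 < x \<Longrightarrow> x < y \<Longrightarrow> y < r0 \<Longrightarrow> F y < F x"
    and F_inc: "\<And>x y. r0 < x \<Longrightarrow> x < y \<Longrightarrow> F x < F y"
    and r: "r > 0" "r \<noteq> r0"
  shows "F r0 < F r"
proof -
  have lim: "(F \<longlongrightarrow> F r0) (at r0)"
    using F_cont r0_pos by (simp add: continuous_on_eq_continuous_at isCont_def)
  define y where "y = (r + r0) / 2"
  consider "r < y" "y < r0" | "r0 < y" "y < r"
    using r by (cases "r < r0") (auto simp: y_def)
  then show ?thesis
  proof cases
    case 1
    have "\<forall>\<^sub>F t in at_left r0. F t \<le> F y"
      using eventually_at_left_real[OF \<open>y < r0\<close>]
      by eventually_elim (use F_dec[of y] 1 r in force)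
    then have "F r0 \<le> F y"
      using tendsto_mono[OF at_le lim] by (intro tendsto_upperbound) auto
    then show ?thesis using F_dec[of r y] 1 r by simp
  next
    case 2
    have "\<forall>\<^sub>F t in at_right r0. F t \<le> F y"
      using eventually_at_right_real[OF \<open>r0 < y\<close>]
      by eventually_elim (use F_inc[of _ y] 2 in force)
    then have "F r0 \<le> F y"
      using tendsto_mono[OF at_le lim] by (intro tendsto_upperbound) auto
    then show ?thesis using F_inc[of y r] 2 by simp
  qed
qed

lemma minimizer_comp_one_well:
  fixes F e :: "real \<Rightarrow> real"
  assumes F_min: "\<forall>r>0. r \<noteq> c \<longrightarrow> F c < F r"
    and e_pos: "\<And>l. l > 0 \<Longrightarrow> e l > 0"
    and e_ex1: "\<exists>!l. l > 0 \<and> e l = c"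
  shows "\<exists>!s. s > 0 \<and> (\<forall>\<mu>>0. F (e s) \<le> F (e \<mu>))"
    and "s > 0 \<Longrightarrow> \<forall>\<mu>>0. F (e s) \<le> F (e \<mu>) \<Longrightarrow> e s = c"
proof -
  obtain l where l: "l > 0" "e l = c" and l_unique: "\<And>m. m > 0 \<Longrightarrow> e m = c \<Longrightarrow> m = l"
    using e_ex1 by (elim ex1E) auto
  have F_le: "F c \<le> F r" if "r > 0" for r
    using F_min[rule_format, of r] that by (cases "r = c") auto
  have minimizer_eq: "e s = c" if "s > 0" "\<forall>\<mu>>0. F (e s) \<le> F (e \<mu>)" for s
  proof -
    have "F (e s) \<le> F c"
      using that l by auto
    then show "e s = c"
      using F_min[rule_format, of "e s"] e_pos that(1) by force
  qed
  then show "s > 0 \<Longrightarrow> \<forall>\<mu>>0. F (e s) \<le> F (e \<mu>) \<Longrightarrow> e s = c" .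
  show "\<exists>!s. s > 0 \<and> (\<forall>\<mu>>0. F (e s) \<le> F (e \<mu>))"
  proof (rule ex1I[of _ l])
    show "l > 0 \<and> (\<forall>\<mu>>0. F (e l) \<le> F (e \<mu>))"
      using l e_pos F_le by simp
    show "s = l" if "s > 0 \<and> (\<forall>\<mu>>0. F (e s) \<le> F (e \<mu>))" for s
      using that minimizer_eq l_unique by blast
  qed
qed

context decreasing_potential
begin

lemma lambda_opt_one_well:
  fixes L :: "(real^'n::finite) set" and F :: "real \<Rightarrow> real"
  assumes decay: "\<exists>\<eta>>0. \<rho> \<in> O[at_top](\<lambda>r. r powr (- real CARD('n) - \<eta>))"
    and F_min: "\<forall>r>0. r \<noteq> c \<longrightarrow> F c < F r" and c_pos: "c > 0"
    and L: "L \<in> lattices"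
  shows "\<exists>!s. s > 0 \<and> (\<forall>\<mu>>0. F (lattice_energy \<rho> (scale_lattice s L))
                              \<le> F (lattice_energy \<rho> (scale_lattice \<mu> L)))"
    and "lambda_opt F \<rho> L > 0"
    and "lattice_energy \<rho> (scale_lattice (lambda_opt F \<rho> L) L) = c"
proof -
  note minimizer = minimizer_comp_one_well[where F = F and c = c
      and e = "\<lambda>l. lattice_energy \<rho> (scale_lattice l L)",
      OF F_min scaled_lattice_energy_pos[OF decay L] scaled_lattice_energy_ex1_eq[OF decay L c_pos]]
  show ex1: "\<exists>!s. s > 0 \<and> (\<forall>\<mu>>0. F (lattice_energy \<rho> (scale_lattice s L))
                              \<le> F (lattice_energy \<rho> (scale_lattice \<mu> L)))"
    by (rule minimizer(1))
  have "lambda_opt F \<rho> L > 0 \<and> (\<forall>\<mu>>0. F (lattice_energy \<rho> (scale_lattice (lambda_opt F \<rho> L) L))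
                              \<le> F (lattice_energy \<rho> (scale_lattice \<mu> L)))"
    unfolding lambda_opt_def by (rule theI'[OF ex1])
  then show "lambda_opt F \<rho> L > 0" and "lattice_energy \<rho> (scale_lattice (lambda_opt F \<rho> L) L) = c"
    using minimizer(2) by blast+
qed

lemma lambda_opt_le_if_energy_le:
  fixes L Ld :: "(real^'n::finite) set" and F :: "real \<Rightarrow> real"
  assumes decay: "\<exists>\<eta>>0. \<rho> \<in> O[at_top](\<lambda>r. r powr (- real CARD('n) - \<eta>))"
    and F_min: "\<forall>r>0. r \<noteq> c \<longrightarrow> F c < F r" and c_pos: "c > 0"
    and Ld: "Ld \<in> lattices" and L: "L \<in> lattices"
    and energy_le: "lattice_energy \<rho> (scale_lattice (lambda_opt F \<rho> Ld) Ld)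
                      \<le> lattice_energy \<rho> (scale_lattice (lambda_opt F \<rho> Ld) L)"
  shows "lambda_opt F \<rho> Ld \<le> lambda_opt F \<rho> L"
proof -
  note lambda_opt = lambda_opt_one_well[where F = F and c = c, OF decay F_min c_pos]
  have "lattice_energy \<rho> (scale_lattice (lambda_opt F \<rho> L) L)
      \<le> lattice_energy \<rho> (scale_lattice (lambda_opt F \<rho> Ld) L)"
    using energy_le lambda_opt(3)[OF Ld] lambda_opt(3)[OF L] by simp
  then show ?thesis
    using scaled_lattice_energy_le_iff[OF decay L lambda_opt(2)[OF Ld] lambda_opt(2)[OF L]] by simp
qed

end

theorem theorem3p1:
  fixes F \<rho> :: "real \<Rightarrow> real" and r0 :: real
  assumes F_cont: "continuous_on {0<..} F"
    and r0_pos: "r0 > 0"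
    and F_dec: "\<And>x y. 0 < x \<Longrightarrow> x < y \<Longrightarrow> y < r0 \<Longrightarrow> F y < F x"
    and F_inc: "\<And>x y. r0 < x \<Longrightarrow> x < y \<Longrightarrow> F x < F y"
    and rho_cont: "continuous_on {0<..} \<rho>"
    and rho_nonneg: "\<And>r. r > 0 \<Longrightarrow> \<rho> r \<ge> 0"
    and rho_dec: "\<And>x y. 0 < x \<Longrightarrow> x < y \<Longrightarrow> \<rho> y < \<rho> x"
    and rho_decay: "\<exists>\<eta>>0. \<rho> \<in> O[at_top](\<lambda>r. r powr (- real CARD('n) - \<eta>))"
  shows "(\<forall>L \<in> (unit_lattices :: (real^'n) set set).
            (\<exists>!s. s > 0 \<and> (\<forall>\<mu>>0. F (lattice_energy \<rho> (scale_lattice s L))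
                                      \<le> F (lattice_energy \<rho> (scale_lattice \<mu> L))))
          \<and> lambda_opt F \<rho> L > 0
          \<and> F (lattice_energy \<rho> (scale_lattice (lambda_opt F \<rho> L) L)) = F r0
          \<and> (\<forall>r>0. F r0 \<le> F r))
     \<and> (\<forall>Ld \<in> (unit_lattices :: (real^'n) set set).
          ((\<forall>L \<in> (unit_lattices :: (real^'n) set set).
              lattice_energy \<rho> (scale_lattice (lambda_opt F \<rho> Ld) Ld)
                \<le> lattice_energy \<rho> (scale_lattice (lambda_opt F \<rho> Ld) L))
           \<and> (\<forall>L \<in> (unit_lattices :: (real^'n) set set).
              lattice_energy \<rho> (scale_lattice (lambda_opt F \<rho> Ld) L)
                = lattice_energy \<rho> (scale_lattice (lambda_opt F \<rho> Ld) Ld)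
              \<longrightarrow> isometric_lattices L Ld))
          \<longrightarrow> (\<forall>L \<in> (unit_lattices :: (real^'n) set set). lambda_opt F \<rho> Ld \<le> lambda_opt F \<rho> L)
            \<and> (\<forall>L \<in> (unit_lattices :: (real^'n) set set). lambda_opt F \<rho> L = lambda_opt F \<rho> Ld \<longrightarrow> isometric_lattices L Ld))"
proof -
  interpret decreasing_potential \<rho>
    using rho_cont rho_nonneg rho_dec by unfold_locales
  have F_min: "\<forall>r>0. r \<noteq> r0 \<longrightarrow> F r0 < F r"
    using one_well_strict_min[OF F_cont r0_pos F_dec F_inc] by blast
  then have F_le: "F r0 \<le> F r" if "r > 0" for r
    using that by (cases "r = r0") (auto intro: less_imp_le)
  have lattice: "L \<in> lattices" if "L \<in> unit_lattices" for L :: "(real^'n) set"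
    using that unit_lattices_subset_lattices by blast
  note lambda_opt = lambda_opt_one_well[where F = F and c = r0, OF rho_decay F_min r0_pos lattice]
  note lambda_opt_le =
    lambda_opt_le_if_energy_le[where F = F and c = r0, OF rho_decay F_min r0_pos lattice lattice]
  have energy_eq: "lattice_energy \<rho> (scale_lattice (lambda_opt F \<rho> Ld) L)
      = lattice_energy \<rho> (scale_lattice (lambda_opt F \<rho> Ld) Ld)"
    if "Ld \<in> unit_lattices" "L \<in> unit_lattices" "lambda_opt F \<rho> L = lambda_opt F \<rho> Ld"
    for Ld L :: "(real^'n) set"
    using that lambda_opt(3) by metis
  show ?thesis
  proof (intro conjI ballI impI)
    fix L :: "(real^'n) set" assume "L \<in> unit_lattices"
    then show "\<exists>!s. s > 0 \<and> (\<forall>\<mu>>0. F (lattice_energy \<rho> (scale_lattice s L))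
                                      \<le> F (lattice_energy \<rho> (scale_lattice \<mu> L)))"
      and "lambda_opt F \<rho> L > 0"
      and "F (lattice_energy \<rho> (scale_lattice (lambda_opt F \<rho> L) L)) = F r0"
      using lambda_opt by simp_all
    show "\<forall>r>0. F r0 \<le> F r"
      using F_le by blast
  qed (use lambda_opt_le energy_eq in blast)+
qed

end
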